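(* Let $\varPhi\subset\mathbb{E}^3$ be a skew ruled surface with invariants $\delta,\kappa,\lambda$, right normalized with support function $q=\frac{f(u)+g(u)v}{w}$, neither $f$ nor $g$ the zero function. Then the following are equivalent: (a) the Tchebychev vector field $\overline{T}$ is incompressible with respect to the relative metric ($\operatorname{div}^G\overline{T}=0$); (b) the scalar curvature $S$ of the relative metric vanishes identically; (c) $\varPhi$ is conoidal and $f=\frac12|\delta|^{1/2}g\left(\int|\delta|^{1/2}\lambda\,\mathrm{d}u+c\right)$, $c\in\mathbb{R}$.
   Context: $\varPhi$ is a ruled $C^r$-surface ($r\ge3$) with nonvanishing Gaussian curvature, in standard parameters $\overline{x}(u,v)=\overline{s}(u)+v\,\overline{e}(u)$, $|\overline{e}|=|\overline{e}'|=1$, $\langle\overline{s}',\overline{e}'\rangle=0$. Frame $\overline{n}=\overline{e}'$, $\overline{z}=\overline{e}\times\overline{n}$. Invariants: $\delta=(\overline{s}',\overline{e},\overline{e}')\neq0$, $\kappa=(\overline{e},\overline{e}',\overline{e}'')$, $\lambda=\cot\sphericalangle(\overline{e},\overline{s}')$, $\overline{s}'=\delta\lambda\overline{e}+\delta\overline{z}$. Conoidal means $\kappa\equiv0$. $w=\sqrt{\delta^2+v^2}$, $\overline{\xi}=(\delta\overline{n}-v\overline{z})/w$. $h_{11}=-(\kappa w^2+\delta'v-\delta^2\lambda)/w$, $h_{12}=\delta/w$, $h_{22}=0$. A relative normalization is determined by its support function $q=\langle\overline{\xi},\overline{y}\rangle\neq0$; right normalization: $q=(f+gv)/w$, $f,g$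 functions of $u$. The relative metric is the indefinite metric $G_{ij}=q^{-1}h_{ij}$; $S$ is its scalar (Gaussian) curvature and $\operatorname{div}^G$ its divergence, $\operatorname{div}^G\overline{T}=|\det G|^{-1/2}(|\det G|^{1/2}T^i)_{/i}$. Darboux tensor $A_{ijk}=q^{-1}\langle\overline{\xi},\nabla^G_k\nabla^G_j\overline{x}_{/i}\rangle$, Tchebychev vector $\overline{T}=T^m\overline{x}_{/m}$, $T^m=\frac12A_i^{\ im}$; equivalently $T^1=\frac{w^2q_{/2}+vq}{\delta w}$, $T^2=\frac{2\delta w^2q_{/1}+\delta'q(\delta^2-v^2)}{2\delta^2w}+\frac{T^1(\kappa w^2+\delta'v-\delta^2\lambda)}{\delta}$. $\int\cdots\mathrm{d}u$ denotes an antiderivative. *)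

theory Defs
  imports "HOL-Analysis.Analysis" "HOL-Analysis.Cross3"
begin

fun vderiv_n :: "nat \<Rightarrow> (real \<Rightarrow> 'a::real_normed_vector) \<Rightarrow> real \<Rightarrow> 'a" where
  "vderiv_n 0 f = f"
| "vderiv_n (Suc n) f = (\<lambda>t. vector_derivative (vderiv_n n f) (at t))"

definition Ck_on :: "nat \<Rightarrow> real set \<Rightarrow> (real \<Rightarrow> 'a::real_normed_vector) \<Rightarrow> bool" where
  "Ck_on k I f \<longleftrightarrow>
     (\<forall>j<k. \<forall>t\<in>I. (vderiv_n j f has_vector_derivative vderiv_n (Suc j) f t) (at t))
     \<and> continuous_on I (vderiv_n k f)"

definition pd1 :: "(real \<Rightarrow> real \<Rightarrow> 'a::real_normed_vector) \<Rightarrow> real \<Rightarrow> real \<Rightarrow> 'a" where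
  "pd1 F u v = vector_derivative (\<lambda>t. F t v) (at u)"

definition pd2 :: "(real \<Rightarrow> real \<Rightarrow> 'a::real_normed_vector) \<Rightarrow> real \<Rightarrow> real \<Rightarrow> 'a" where
  "pd2 F u v = vector_derivative (\<lambda>t. F u t) (at v)"

definition triple :: "real^3 \<Rightarrow> real^3 \<Rightarrow> real^3 \<Rightarrow> real" where
  "triple a b c = a \<bullet> cross3 b c"

definition vec_angle :: "real^3 \<Rightarrow> real^3 \<Rightarrow> real" where
  "vec_angle a b = arccos ((a \<bullet> b) / (norm a * norm b))"

definition rsurf :: "(real \<Rightarrow> real^3) \<Rightarrow> (real \<Rightarrow> real^3) \<Rightarrow> real \<Rightarrow> real \<Rightarrow> real^3" where
  "rsurf s e u v = s u + v *\<^sub>R e u"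

definition rs_delta :: "(real \<Rightarrow> real^3) \<Rightarrow> (real \<Rightarrow> real^3) \<Rightarrow> real \<Rightarrow> real" where
  "rs_delta s e u = triple (vderiv_n 1 s u) (e u) (vderiv_n 1 e u)"

definition rs_kappa :: "(real \<Rightarrow> real^3) \<Rightarrow> real \<Rightarrow> real" where
  "rs_kappa e u = triple (e u) (vderiv_n 1 e u) (vderiv_n 2 e u)"

definition rs_lambda :: "(real \<Rightarrow> real^3) \<Rightarrow> (real \<Rightarrow> real^3) \<Rightarrow> real \<Rightarrow> real" where
  "rs_lambda s e u = cot (vec_angle (e u) (vderiv_n 1 s u))"

definition conoidal_on :: "real set \<Rightarrow> (real \<Rightarrow> real^3) \<Rightarrow> bool" where
  "conoidal_on I e \<longleftrightarrow> (\<forall>u\<in>I. rs_kappa e u = 0)"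

definition rs_w :: "(real \<Rightarrow> real^3) \<Rightarrow> (real \<Rightarrow> real^3) \<Rightarrow> real \<Rightarrow> real \<Rightarrow> real" where
  "rs_w s e u v = sqrt ((rs_delta s e u)\<^sup>2 + v\<^sup>2)"

definition rs_xi :: "(real \<Rightarrow> real^3) \<Rightarrow> (real \<Rightarrow> real^3) \<Rightarrow> real \<Rightarrow> real \<Rightarrow> real^3" where
  "rs_xi s e u v =
     (let N = cross3 (pd1 (rsurf s e) u v) (pd2 (rsurf s e) u v) in (1 / norm N) *\<^sub>R N)"

definition rs_h11 where "rs_h11 s e u v = rs_xi s e u v \<bullet> pd1 (pd1 (rsurf s e)) u v"
definition rs_h12 where "rs_h12 s e u v = rs_xi s e u v \<bullet> pd2 (pd1 (rsurf s e)) u v"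
definition rs_h22 where "rs_h22 s e u v = rs_xi s e u v \<bullet> pd2 (pd2 (rsurf s e)) u v"

definition rn_q where
  "rn_q s e f g u v = (f u + g u * v) / rs_w s e u v"

definition rn_G11 where "rn_G11 s e f g u v = rs_h11 s e u v / rn_q s e f g u v"
definition rn_G12 where "rn_G12 s e f g u v = rs_h12 s e u v / rn_q s e f g u v"
definition rn_G22 where "rn_G22 s e f g u v = rs_h22 s e u v / rn_q s e f g u v"

text \<open>Gaussian (scalar) curvature of a 2-dimensional (possibly indefinite) metric
  E du^2 + 2F du dv + G dv^2, via the Brioschi formula.\<close>
definition metric_curvature ::
  "(real \<Rightarrow> real \<Rightarrow> real) \<Rightarrow> (real \<Rightarrow> real \<Rightarrow> real) \<Rightarrow> (real \<Rightarrow> real \<Rightarrow> real) \<Rightarrow> real \<Rightarrow> real \<Rightarrow> real"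
where
  "metric_curvature E F G u v =
    (let e = E u v; f = F u v; g = G u v;
         Eu = pd1 E u v; Ev = pd2 E u v; Fu = pd1 F u v; Fv = pd2 F u v;
         Gu = pd1 G u v; Gv = pd2 G u v;
         Evv = pd2 (pd2 E) u v; Fuv = pd2 (pd1 F) u v; Guu = pd1 (pd1 G) u v;
         M1 = (- Evv / 2 + Fuv - Guu / 2) * (e * g - f * f)
              - (Eu / 2) * ((Fv - Gu / 2) * g - f * (Gv / 2))
              + (Fu - Ev / 2) * ((Fv - Gu / 2) * f - e * (Gv / 2));
         M2 = - (Ev / 2) * ((Ev / 2) * g - f * (Gu / 2))
              + (Gu / 2) * ((Ev / 2) * f - e * (Gu / 2))
     in (M1 - M2) / (e * g - f * f)\<^sup>2)"

definition rn_S where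
  "rn_S s e f g u v = metric_curvature (rn_G11 s e f g) (rn_G12 s e f g) (rn_G22 s e f g) u v"

text \<open>Components of the Tchebychev vector (formulas from the context; the factor
  (kappa w^2 + delta' v - delta^2 lambda) is written as -w h_11).\<close>
definition rn_T1 where
  "rn_T1 s e f g u v =
     (let d = rs_delta s e u; w = rs_w s e u v; q = rn_q s e f g u v in
      (w\<^sup>2 * pd2 (rn_q s e f g) u v + v * q) / (d * w))"

definition rn_T2 where
  "rn_T2 s e f g u v =
     (let d = rs_delta s e u; d' = deriv (rs_delta s e) u; w = rs_w s e u v;
          q = rn_q s e f g u v in
      (2 * d * w\<^sup>2 * pd1 (rn_q s e f g) u v + d' * q * (d\<^sup>2 - v\<^sup>2)) / (2 * d\<^sup>2 * w)
      + rn_T1 s e f g u v * (- w * rs_h11 s e u v) / d)"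

definition rn_rootdet where
  "rn_rootdet s e f g u v =
     sqrt \<bar>rn_G11 s e f g u v * rn_G22 s e f g u v - (rn_G12 s e f g u v)\<^sup>2\<bar>"

definition rn_divT where
  "rn_divT s e f g u v =
     (pd1 (\<lambda>a b. rn_rootdet s e f g a b * rn_T1 s e f g a b) u v
      + pd2 (\<lambda>a b. rn_rootdet s e f g a b * rn_T2 s e f g a b) u v)
     / rn_rootdet s e f g u v"

end

theory Submission
  imports Defs
begin

text \<open>
  For the right normalization \<open>G\<^sub>2\<^sub>2 = 0\<close>, \<open>G\<^sub>1\<^sub>2 = \<delta> / (f + g v)\<close> and
  \<open>G\<^sub>1\<^sub>1 = w h\<^sub>1\<^sub>1 / (f + g v)\<close>, where \<open>w h\<^sub>1\<^sub>1\<close> is a quadratic polynomial in \<open>v\<close>.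
  Hence \<open>\<delta>\<^sup>2 (f + g v) div T\<close> and \<open>2 \<delta>\<^sup>2 (f + g v) S\<close> are quadratic polynomials in \<open>v\<close>,
  whose coefficients involve only \<open>\<kappa>\<close>, \<open>f\<close>, \<open>g\<close> and the residual
  \<open>R = 2\<delta> (g' f - g f') + \<delta>' f g + \<delta> \<sigma> g\<^sup>2\<close>, \<open>\<sigma> = \<langle>s', e\<rangle>\<close>.
  Condition (a) amounts to \<open>\<kappa> g = 0\<close> and \<open>R = 0\<close>, condition (b) to \<open>\<kappa> g = 0\<close> and \<open>R = 2 \<kappa> f\<^sup>2\<close>.
  In (b), \<open>\<kappa> \<noteq> 0\<close> at a point forces \<open>g = 0\<close> nearby, so \<open>R = 0\<close> there while \<open>f \<noteq> 0\<close>;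
  thus \<open>\<kappa> = 0\<close>.
  In (a), \<open>R = 0\<close> says that \<open>f / (g \<bar>\<delta>\<bar>\<^sup>1\<^sup>/\<^sup>2)\<close> has derivative \<open>\<bar>\<delta>\<bar>\<^sup>1\<^sup>/\<^sup>2 \<lambda> / 2\<close> where
  \<open>g \<noteq> 0\<close>. A quotient with bounded derivative cannot blow up, and \<open>f\<close>, \<open>g\<close> have no common
  zero, so \<open>g\<close> vanishes nowhere and again \<open>\<kappa> = 0\<close>. Integrating gives the formula for
  \<open>f\<close> in (c).
\<close>

declare vderiv_n.simps(2)[simp del]
declare One_nat_def[simp del]

section \<open>Scalar triple products\<close>

lemma triple_expand:
  "triple a b c = a$1*(b$2*c$3 - b$3*c$2) + a$2*(b$3*c$1 - b$1*c$3) + a$3*(b$1*c$2 - b$2*c$1)"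
  by (simp add: triple_def cross3_simps)

lemma inner_real3_expand: "(a::real^3) \<bullet> b = a$1*b$1 + a$2*b$2 + a$3*b$3"
  by (simp add: inner_vec_def sum_3)

lemma triple_mult_triple:
  "triple a b c * triple x y z =
     (a\<bullet>x)*((b\<bullet>y)*(c\<bullet>z) - (b\<bullet>z)*(c\<bullet>y)) - (a\<bullet>y)*((b\<bullet>x)*(c\<bullet>z) - (b\<bullet>z)*(c\<bullet>x))
     + (a\<bullet>z)*((b\<bullet>x)*(c\<bullet>y) - (b\<bullet>y)*(c\<bullet>x))"
  unfolding triple_expand inner_real3_expand by algebra

lemma triple_mult_inner_self:
  "triple a b c * (d \<bullet> d) = (a\<bullet>d)*triple d b c + (b\<bullet>d)*triple a d c + (c\<bullet>d)*triple a b d"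
  unfolding triple_expand inner_real3_expand by algebra

lemma triple_add_scaleR:
  "triple (a + r *\<^sub>R a') b (c + r *\<^sub>R c') =
     triple a b c + r * triple a' b c + r * triple a b c' + r*r * triple a' b c'"
  unfolding triple_expand by (simp add: algebra_simps)

lemma triple_swap: "triple a b c = - triple b a c" "triple a b c = - triple a c b"
  unfolding triple_expand by algebra+

lemma triple_cycle: "triple a b c = triple b c a"
  unfolding triple_expand by algebra

lemma triple_repeated: "triple a a c = 0" "triple a c a = 0" "triple c a a = 0"
  unfolding triple_expand by algebra+

lemma inner_cross3_eq_triple: "cross3 p q \<bullet> x = triple p q x"
  unfolding triple_expand inner_real3_expand by (simp add: cross3_simps)

lemma has_real_derivative_triple:
  assumes "(a has_vector_derivative a') (at t)" "(b has_vector_derivative b') (at t)"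
    "(c has_vector_derivative c') (at t)"
  shows "((\<lambda>x. triple (a x) (b x) (c x)) has_real_derivative
     triple a' (b t) (c t) + triple (a t) b' (c t) + triple (a t) (b t) c') (at t)"
proof -
  have cross: "((\<lambda>x. cross3 (b x) (c x)) has_vector_derivative cross3 (b t) c' + cross3 b' (c t)) (at t)"
    using bounded_bilinear.has_vector_derivative[OF _ assms(2,3)] bilinear_cross
      bilinear_conv_bounded_bilinear by blast
  show ?thesis
    unfolding has_real_derivative_iff_has_vector_derivative triple_def
    by (rule has_vector_derivative_eq_rhs
        [OF bounded_bilinear.has_vector_derivative[OF bounded_bilinear_inner assms(1) cross]])
      (simp add: inner_add_right)
qed

lemma has_real_derivative_inner:
  assumes "(a has_vector_derivative a') (at t)" "(b has_vector_derivative b') (at t)"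
  shows "((\<lambda>x. (a x::real^3) \<bullet> b x) has_real_derivative a' \<bullet> b t + a t \<bullet> b') (at t)"
  unfolding has_real_derivative_iff_has_vector_derivative
  by (rule has_vector_derivative_eq_rhs
      [OF bounded_bilinear.has_vector_derivative[OF bounded_bilinear_inner assms]])
    (simp add: inner_commute)

lemma vector_derivative_at_real:
  "(\<phi> has_real_derivative D) (at x) \<Longrightarrow> vector_derivative \<phi> (at x) = D"
  by (simp add: has_real_derivative_iff_has_vector_derivative vector_derivative_at)

lemma has_real_derivative_constant_on_open_eq_0:
  assumes "open I" "u \<in> I" "\<forall>t\<in>I. \<phi> t = c" "(\<phi> has_real_derivative D) (at u)"
  shows "D = 0"
proof -
  have "(\<phi> has_real_derivative 0) (at u)"
    by (rule has_field_derivative_transform_within_open[OF DERIV_const assms(1,2)])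
      (use assms(3) in auto)
  then show ?thesis using assms(4) DERIV_unique by blast
qed

lemma has_real_derivative_abs:
  assumes "(f has_real_derivative D) (at x within S)" "f x \<noteq> 0" "E = sgn (f x) * D"
  shows "((\<lambda>t. \<bar>f t\<bar>) has_real_derivative E) (at x within S)"
proof -
  have "((\<lambda>t. sqrt ((f t)^2)) has_real_derivative
          (inverse (sqrt ((f x)^2)) / 2) * (2 * f x * D)) (at x within S)"
    by (rule DERIV_chain2[OF DERIV_real_sqrt]) (use assms in \<open>auto intro!: derivative_eq_intros\<close>)
  moreover have "(inverse (sqrt ((f x)^2)) / 2) * (2 * f x * D) = E"
    using assms(2,3) by (simp add: field_simps sgn_if)
  ultimately show ?thesis by (simp only: real_sqrt_abs)
qed

lemma has_real_derivative_div_mult_sqrt_abs: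
  assumes "(f has_real_derivative f') (at t)" "(g has_real_derivative g') (at t)"
    "(d has_real_derivative d') (at t)" and "d t \<noteq> 0" "g t \<noteq> 0"
  shows "((\<lambda>t. f t / (g t * sqrt \<bar>d t\<bar>)) has_real_derivative
     (2 * d t * (f' * g t - f t * g') - d' * f t * g t) / (2 * d t * (g t)^2 * sqrt \<bar>d t\<bar>)) (at t)"
proof -
  define r where "r = sqrt \<bar>d t\<bar>"
  have "r > 0" "r * r = sgn (d t) * d t" "sgn (d t) * sgn (d t) = 1"
    using \<open>d t \<noteq> 0\<close> by (auto simp: r_def sgn_if)
  then have "(f' * (g t * r) - f t * (g' * r + g t * (inverse r / 2 * (sgn (d t) * d')))) / (g t * r)^2
      = (2 * d t * (f' * g t - f t * g') - d' * f t * g t) / (2 * d t * (g t)^2 * r)"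
    using assms(4,5) by (simp add: divide_simps power2_eq_square; algebra)
  moreover have "((\<lambda>t. f t / (g t * sqrt \<bar>d t\<bar>)) has_real_derivative
     (f' * (g t * r) - f t * (g' * r + g t * (inverse r / 2 * (sgn (d t) * d')))) / (g t * r)^2) (at t)"
    unfolding r_def using assms(4,5)
    by (auto intro!: derivative_eq_intros has_real_derivative_abs assms(1-3) simp: power2_eq_square)
  ultimately show ?thesis by (simp add: r_def)
qed

lemma Ck_on_3_has_vector_derivative:
  assumes "Ck_on 3 I s" "t \<in> I"
  shows "(s has_vector_derivative vderiv_n 1 s t) (at t)"
    "(vderiv_n 1 s has_vector_derivative vderiv_n 2 s t) (at t)"
    "(vderiv_n 2 s has_vector_derivative vderiv_n 3 s t) (at t)"
proof -
  have "\<And>j. j < 3 \<Longrightarrow> (vderiv_n j s has_vector_derivative vderiv_n (Suc j) s t) (at t)"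
    using assms unfolding Ck_on_def by blast
  from this[of 0] this[of 1] this[of 2] show
    "(s has_vector_derivative vderiv_n 1 s t) (at t)"
    "(vderiv_n 1 s has_vector_derivative vderiv_n 2 s t) (at t)"
    "(vderiv_n 2 s has_vector_derivative vderiv_n 3 s t) (at t)"
    by (simp_all add: One_nat_def numeral_2_eq_2 numeral_3_eq_3)
qed

lemma Ck_on_1_has_real_derivative:
  "Ck_on 1 I f \<Longrightarrow> t \<in> I \<Longrightarrow> (f has_real_derivative vderiv_n 1 f t) (at t)"
  unfolding Ck_on_def has_real_derivative_iff_has_vector_derivative by (auto simp: One_nat_def)

lemma quadratic_vanishing_off_root:
  fixes p q A B C :: real
  assumes "\<forall>v. p + q * v \<noteq> 0 \<longrightarrow> A + B * v + C * v^2 = 0" "p \<noteq> 0 \<or> q \<noteq> 0"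
  shows "A = 0 \<and> B = 0 \<and> C = 0"
proof -
  define t where "t = (if q = 0 then 0 else - p / q)"
  have "p + q * (t + k) \<noteq> 0" if "k \<noteq> 0" for k
    using assms(2) that by (cases "q = 0") (auto simp: t_def algebra_simps)
  then have "A + B * (t + k) + C * (t + k)^2 = 0" if "k \<noteq> 0" for k
    using assms(1) that by blast
  from this[of 1] this[of 2] this[of 3] have
    "A + B * (t + 1) + C * (t + 1)^2 = 0" "A + B * (t + 2) + C * (t + 2)^2 = 0"
    "A + B * (t + 3) + C * (t + 3)^2 = 0"
    by simp_all
  then have "C = 0" "B = 0" "A = 0" by algebra+
  then show ?thesis by simp
qed

text \<open>On the segment \<open>F / G\<close> is Lipschitz, so \<open>\<bar>F\<bar> \<le> B \<bar>G\<bar>\<close> there; let \<open>t \<rightarrow> a\<close>.\<close>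

lemma numerator_zero_at_nearest_zero_of_denominator:
  fixes F G D :: "real \<Rightarrow> real"
  assumes "a \<noteq> b"
    and cont: "continuous_on (closed_segment a b) F" "continuous_on (closed_segment a b) G"
      "continuous_on (closed_segment a b) D"
    and "G a = 0" and G_nz: "\<forall>t\<in>closed_segment a b - {a}. G t \<noteq> 0"
    and der: "\<forall>t\<in>closed_segment a b - {a}. ((\<lambda>t. F t / G t) has_real_derivative D t) (at t)"
  shows "F a = 0"
proof -
  obtain M where M: "\<forall>t\<in>closed_segment a b. \<bar>D t\<bar> \<le> M"
    using compact_imp_bounded[OF compact_continuous_image[OF cont(3) compact_segment]]
    unfolding bounded_real by auto
  define B where "B = \<bar>F b / G b\<bar> + M * \<bar>b - a\<bar>"
  have bound: "\<bar>F t\<bar> \<le> B * \<bar>G t\<bar>" if t: "t \<in> closed_segment a b - {a}" for t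
  proof -
    have sub: "closed_segment t b \<subseteq> closed_segment a b - {a}"
      using t \<open>a \<noteq> b\<close> by (auto simp: closed_segment_eq_real_ivl split: if_splits)
    have "\<bar>F t / G t - F b / G b\<bar> \<le> M * \<bar>t - b\<bar>"
      using field_differentiable_bound[of "closed_segment t b" "\<lambda>t. F t / G t" D M t b] sub der M
      by (auto intro: has_field_derivative_at_within)
    also have "\<dots> \<le> M * \<bar>b - a\<bar>"
      using t M \<open>a \<noteq> b\<close>
      by (intro mult_left_mono) (auto simp: closed_segment_eq_real_ivl split: if_splits)
    finally have "\<bar>F t / G t\<bar> \<le> B" unfolding B_def by linarith
    then show ?thesis using G_nz t by (simp add: abs_divide divide_le_eq)
  qed
  define \<phi> where "\<phi> t = \<bar>F t\<bar> - B * \<bar>G t\<bar>" for t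
  have "closed (closed_segment a b \<inter> \<phi> -` {..0})"
    unfolding \<phi>_def using cont
    by (intro continuous_closed_preimage continuous_intros closed_segment closed_atMost)
  moreover have "open_segment a b \<subseteq> closed_segment a b \<inter> \<phi> -` {..0}"
  proof
    fix t assume "t \<in> open_segment a b"
    then have "t \<in> closed_segment a b - {a}" by (simp add: open_segment_def)
    then show "t \<in> closed_segment a b \<inter> \<phi> -` {..0}" using bound[of t] by (simp add: \<phi>_def)
  qed
  ultimately have "closure (open_segment a b) \<subseteq> closed_segment a b \<inter> \<phi> -` {..0}"
    by (rule closure_minimal[rotated])
  moreover have "a \<in> closure (open_segment a b)" using \<open>a \<noteq> b\<close> by simp
  ultimately have "\<phi> a \<le> 0" by blast
  then show ?thesis using \<open>G a = 0\<close> by (simp add: \<phi>_def)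
qed

lemma denominator_nonzero_if_quotient_has_continuous_derivative:
  fixes F G D :: "real \<Rightarrow> real"
  assumes I: "is_interval I"
    and cont: "continuous_on I F" "continuous_on I G" "continuous_on I D"
    and "\<exists>y\<in>I. G y \<noteq> 0" and no_common_zero: "\<forall>t\<in>I. G t = 0 \<longrightarrow> F t \<noteq> 0"
    and der: "\<forall>t\<in>I. G t \<noteq> 0 \<longrightarrow> ((\<lambda>t. F t / G t) has_real_derivative D t) (at t)"
  shows "\<forall>t\<in>I. G t \<noteq> 0"
proof (rule ccontr)
  assume "\<not> (\<forall>t\<in>I. G t \<noteq> 0)"
  then obtain t y where t: "t \<in> I" "G t = 0" and y: "y \<in> I" "G y \<noteq> 0"
    using \<open>\<exists>y\<in>I. G y \<noteq> 0\<close> by blast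
  define Z where "Z = closed_segment t y \<inter> G -` {0}"
  have "closed Z"
    unfolding Z_def
    using continuous_on_subset[OF cont(2) closed_segment_subset[OF t(1) y(1) is_interval_convex[OF I]]]
    by (intro continuous_closed_preimage closed_segment closed_singleton)
  moreover have "Z \<noteq> {}" using t unfolding Z_def by auto
  ultimately obtain a where "a \<in> Z" and nearest: "\<And>z. z \<in> Z \<Longrightarrow> dist y a \<le> dist y z"
    using distance_attains_inf[of Z y] by metis
  then have a: "a \<in> closed_segment t y" "G a = 0" unfolding Z_def by auto
  have sub: "closed_segment a y \<subseteq> I"
    using a(1) closed_segment_subset[OF t(1) y(1) is_interval_convex[OF I]]
    by (intro closed_segment_subset[OF _ y(1) is_interval_convex[OF I]]) auto
  have nz: "G z \<noteq> 0" if z: "z \<in> closed_segment a y - {a}" for z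
  proof
    assume "G z = 0"
    moreover have "z \<in> closed_segment t y" "dist y z < dist y a"
      using a(1) z by (auto simp: closed_segment_eq_real_ivl dist_real_def split: if_splits)
    ultimately show False using nearest[of z] by (auto simp: Z_def)
  qed
  have "a \<noteq> y" using a y by auto
  then have "F a = 0"
    using a(2) nz der sub
    by (intro numerator_zero_at_nearest_zero_of_denominator[of a y F G D]
        continuous_on_subset[OF cont(1) sub] continuous_on_subset[OF cont(2) sub]
        continuous_on_subset[OF cont(3) sub]) auto
  then show False using no_common_zero a sub by auto
qed

section \<open>Curvature of a metric with \<open>G\<^sub>2\<^sub>2 = 0\<close>\<close>

lemma metric_curvature_G_eq_0:
  "metric_curvature E F (\<lambda>u v. 0) u v =
    ((- pd2 (pd2 E) u v / 2 + pd2 (pd1 F) u v) * (- ((F u v)^2))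
     + (pd1 F u v - pd2 E u v / 2) * (pd2 F u v * F u v)) / ((F u v)^2)^2"
proof -
  have "pd1 (\<lambda>u v. 0::real) = (\<lambda>u v. 0)" "pd2 (\<lambda>u v. 0::real) = (\<lambda>u v. 0)"
    by (auto simp: pd1_def pd2_def intro!: ext vector_derivative_at_real)
  then show ?thesis unfolding metric_curvature_def Let_def by (simp add: power2_eq_square)
qed

lemma pd2_quadratic_fraction:
  fixes E :: "real \<Rightarrow> real \<Rightarrow> real"
  assumes E: "\<forall>y. E u y = (a + b * y + c * y^2) / (p + q * y)" and "p + q * v \<noteq> 0"
  shows "pd2 E u v = ((b + 2*c * v) * (p + q * v) - (a + b * v + c * v^2) * q) / (p + q * v)^2"
    and "pd2 (pd2 E) u v = 2*c / (p + q * v) - 2*q*(b + 2*c * v) / (p + q * v)^2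
                            + 2*q^2*(a + b * v + c * v^2) / (p + q * v)^3"
proof -
  define W where "W = {y. p + q * y \<noteq> 0}"
  have W: "open W" "v \<in> W"
    using \<open>p + q * v \<noteq> 0\<close> unfolding W_def by (auto intro!: open_Collect_neq continuous_intros)
  have Ev: "pd2 E u y = ((b + 2*c*y) * (p + q*y) - (a + b*y + c*y^2) * q) / (p + q*y)^2"
    if "y \<in> W" for y
    unfolding pd2_def E[rule_format]
    by (rule vector_derivative_at_real) (use that in \<open>auto simp: W_def intro!: derivative_eq_intros\<close>,
        auto simp: divide_simps power2_eq_square; algebra)
  then show "pd2 E u v = ((b + 2*c * v) * (p + q * v) - (a + b * v + c * v^2) * q) / (p + q * v)^2"
    using W(2) .
  have "((\<lambda>y. ((b + 2*c*y) * (p + q*y) - (a + b*y + c*y^2) * q) / (p + q*y)^2)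
         has_real_derivative 2*c / (p + q * v) - 2*q*(b + 2*c * v) / (p + q * v)^2
                              + 2*q^2*(a + b * v + c * v^2) / (p + q * v)^3) (at v)"
    using W(2) unfolding W_def
    by (auto intro!: derivative_eq_intros)
      (auto simp: divide_simps power2_eq_square power3_eq_cube; algebra)
  then have "((\<lambda>y. pd2 E u y) has_real_derivative 2*c / (p + q * v) - 2*q*(b + 2*c * v) / (p + q * v)^2
                              + 2*q^2*(a + b * v + c * v^2) / (p + q * v)^3) (at v)"
    by (rule has_field_derivative_transform_within_open[OF _ W]) (simp add: Ev)
  then show "pd2 (pd2 E) u v = 2*c / (p + q * v) - 2*q*(b + 2*c * v) / (p + q * v)^2
                              + 2*q^2*(a + b * v + c * v^2) / (p + q * v)^3"
    unfolding pd2_def[of "pd2 E"] by (rule vector_derivative_at_real)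
qed

lemma pd_linear_fraction:
  fixes F :: "real \<Rightarrow> real \<Rightarrow> real" and d f g :: "real \<Rightarrow> real"
  assumes F: "\<forall>t\<in>J. \<forall>y. F t y = d t / (f t + g t * y)" and J: "open J" "u \<in> J"
    and d': "(d has_real_derivative d') (at u)"
    and f': "(f has_real_derivative f') (at u)"
    and g': "(g has_real_derivative g') (at u)"
    and "f u + g u * v \<noteq> 0"
  shows "pd2 F u v = - d u * g u / (f u + g u * v)^2"
    and "pd1 F u v = (d' * (f u + g u * v) - d u * (f' + g' * v)) / (f u + g u * v)^2"
    and "pd2 (pd1 F) u v = - d' * g u / (f u + g u * v)^2 - d u * g' / (f u + g u * v)^2
                           + 2 * d u * g u * (f' + g' * v) / (f u + g u * v)^3"
proof -
  define W where "W = {y. f u + g u * y \<noteq> 0}"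
  have W: "open W" "v \<in> W"
    using \<open>f u + g u * v \<noteq> 0\<close> unfolding W_def by (auto intro!: open_Collect_neq continuous_intros)
  have "F u = (\<lambda>y. d u / (f u + g u * y))" using F J by auto
  moreover have "((\<lambda>y. d u / (f u + g u * y)) has_real_derivative - d u * g u / (f u + g u * v)^2) (at v)"
    using \<open>f u + g u * v \<noteq> 0\<close> by (auto intro!: derivative_eq_intros simp: power2_eq_square)
  ultimately show "pd2 F u v = - d u * g u / (f u + g u * v)^2"
    unfolding pd2_def by (simp add: vector_derivative_at_real)
  have Fu: "pd1 F u y = (d' * (f u + g u * y) - d u * (f' + g' * y)) / (f u + g u * y)^2"
    if "y \<in> W" for y
    unfolding pd1_def
  proof (rule vector_derivative_at_real)
    have "((\<lambda>t. d t / (f t + g t * y)) has_real_derivative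
           (d' * (f u + g u * y) - d u * (f' + g' * y)) / (f u + g u * y)^2) (at u)"
      using that unfolding W_def
      by (auto intro!: derivative_eq_intros d' f' g')
        (auto simp: divide_simps power2_eq_square; algebra)
    then show "((\<lambda>t. F t y) has_real_derivative
                 (d' * (f u + g u * y) - d u * (f' + g' * y)) / (f u + g u * y)^2) (at u)"
      by (rule has_field_derivative_transform_within_open[OF _ J]) (simp add: F)
  qed
  then show "pd1 F u v = (d' * (f u + g u * v) - d u * (f' + g' * v)) / (f u + g u * v)^2"
    using W(2) .
  have "((\<lambda>y. (d' * (f u + g u * y) - d u * (f' + g' * y)) / (f u + g u * y)^2) has_real_derivative
         - d' * g u / (f u + g u * v)^2 - d u * g' / (f u + g u * v)^2
         + 2 * d u * g u * (f' + g' * v) / (f u + g u * v)^3) (at v)"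
    using W(2) unfolding W_def
    by (auto intro!: derivative_eq_intros)
      (auto simp: divide_simps power2_eq_square power3_eq_cube; algebra)
  then have "((\<lambda>y. pd1 F u y) has_real_derivative
         - d' * g u / (f u + g u * v)^2 - d u * g' / (f u + g u * v)^2
         + 2 * d u * g u * (f' + g' * v) / (f u + g u * v)^3) (at v)"
    by (rule has_field_derivative_transform_within_open[OF _ W]) (simp add: Fu)
  then show "pd2 (pd1 F) u v = - d' * g u / (f u + g u * v)^2 - d u * g' / (f u + g u * v)^2
                               + 2 * d u * g u * (f' + g' * v) / (f u + g u * v)^3"
    unfolding pd2_def[of "pd1 F"] by (rule vector_derivative_at_real)
qed

lemma metric_curvature_fractional:
  fixes E F :: "real \<Rightarrow> real \<Rightarrow> real" and d f g :: "real \<Rightarrow> real"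
  assumes E: "\<forall>y. E u y = (a + b * y + c * y^2) / (f u + g u * y)"
    and F: "\<forall>t\<in>J. \<forall>b. F t b = d t / (f t + g t * b)"
    and J: "open J" "u \<in> J"
    and d': "(d has_real_derivative d') (at u)"
    and f': "(f has_real_derivative f') (at u)"
    and g': "(g has_real_derivative g') (at u)"
    and "f u + g u * v \<noteq> 0" and "d u \<noteq> 0"
  shows "metric_curvature E F (\<lambda>u v. 0) u v =
    (d u * (g' * f u - g u * f') + c * (f u)^2 + c * f u * g u * v + c * (g u)^2 * v^2 / 2
     - b * f u * g u / 2 + a * (g u)^2 / 2) / ((d u)^2 * (f u + g u * v))"
  using \<open>f u + g u * v \<noteq> 0\<close> \<open>d u \<noteq> 0\<close>
  unfolding metric_curvature_G_eq_0 pd2_quadratic_fraction[where E = E and u = u and a = a and b = b and c = c and p = "f u" and q = "g u", OF E \<open>f u + g u * v \<noteq> 0\<close>]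
    pd_linear_fraction[OF F J d' f' g' \<open>f u + g u * v \<noteq> 0\<close>] F[rule_format, OF J(2)]
  by (simp add: divide_simps power2_eq_square power3_eq_cube; algebra)

section \<open>Ruled surfaces in standard parameters\<close>

lemma pd1_rsurf:
  assumes "Ck_on 3 I s" "Ck_on 3 I e" "t \<in> I"
  shows "pd1 (rsurf s e) t v = vderiv_n 1 s t + v *\<^sub>R vderiv_n 1 e t"
  unfolding pd1_def rsurf_def
  by (rule vector_derivative_at) (auto intro!: derivative_eq_intros
      Ck_on_3_has_vector_derivative[OF assms(1,3)] Ck_on_3_has_vector_derivative[OF assms(2,3)])

lemma pd2_rsurf: "pd2 (rsurf s e) t v = e t"
  unfolding pd2_def rsurf_def by (rule vector_derivative_at) (auto intro!: derivative_eq_intros)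

lemma pd1_pd1_rsurf:
  assumes "Ck_on 3 I s" "Ck_on 3 I e" "t \<in> I" "open I"
  shows "pd1 (pd1 (rsurf s e)) t v = vderiv_n 2 s t + v *\<^sub>R vderiv_n 2 e t"
  unfolding pd1_def[of "pd1 (rsurf s e)"]
proof (rule vector_derivative_at)
  have "((\<lambda>t. vderiv_n 1 s t + v *\<^sub>R vderiv_n 1 e t) has_vector_derivative
         vderiv_n 2 s t + v *\<^sub>R vderiv_n 2 e t) (at t)"
    by (auto intro!: derivative_eq_intros Ck_on_3_has_vector_derivative[OF assms(1,3)]
        Ck_on_3_has_vector_derivative[OF assms(2,3)])
  then show "((\<lambda>t. pd1 (rsurf s e) t v) has_vector_derivative
               vderiv_n 2 s t + v *\<^sub>R vderiv_n 2 e t) (at t)"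
    by (rule has_vector_derivative_transform_within_open[OF _ assms(4,3)])
      (simp add: pd1_rsurf[OF assms(1,2)])
qed

lemma pd2_pd1_rsurf:
  assumes "Ck_on 3 I s" "Ck_on 3 I e" "t \<in> I"
  shows "pd2 (pd1 (rsurf s e)) t v = vderiv_n 1 e t"
  unfolding pd2_def[of "pd1 (rsurf s e)"] pd1_rsurf[OF assms]
  by (rule vector_derivative_at) (auto intro!: derivative_eq_intros)

lemma rn_G22_eq_0: "rn_G22 s e f g = (\<lambda>u v. 0)"
proof -
  have "pd2 (pd2 (rsurf s e)) u v = 0" for u v
    unfolding pd2_def[of "pd2 (rsurf s e)"] pd2_rsurf
    by (rule vector_derivative_at) (auto intro!: derivative_eq_intros)
  then show ?thesis by (simp add: rn_G22_def rs_h22_def fun_eq_iff)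
qed

locale standard_ruled_surface =
  fixes I :: "real set" and s e :: "real \<Rightarrow> real^3"
  assumes open_domain: "open I"
    and s_C3: "Ck_on 3 I s" and e_C3: "Ck_on 3 I e"
    and standard: "\<forall>u\<in>I. norm (e u) = 1 \<and> norm (vderiv_n 1 e u) = 1
                          \<and> vderiv_n 1 s u \<bullet> vderiv_n 1 e u = 0"
    and skew: "\<forall>u\<in>I. rs_delta s e u \<noteq> 0"
begin

abbreviation delta :: "real \<Rightarrow> real" where "delta \<equiv> rs_delta s e"
abbreviation kappa :: "real \<Rightarrow> real" where "kappa \<equiv> rs_kappa e"

text \<open>The paper writes \<open>\<langle>s', e\<rangle> = \<delta> \<lambda>\<close>; with \<open>\<lambda>\<close> defined as a cotangent,
  \<open>sigma u = \<bar>delta u\<bar> * rs_lambda s e u\<close> (\<open>lambda_eq\<close>).\<close>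

abbreviation sigma :: "real \<Rightarrow> real" where "sigma u \<equiv> vderiv_n 1 s u \<bullet> e u"

lemmas s_derivatives = Ck_on_3_has_vector_derivative[OF s_C3]
lemmas e_derivatives = Ck_on_3_has_vector_derivative[OF e_C3]

lemma frame_inner:
  assumes u: "u \<in> I"
  shows "e u \<bullet> e u = 1" "vderiv_n 1 e u \<bullet> vderiv_n 1 e u = 1"
    "vderiv_n 1 s u \<bullet> vderiv_n 1 e u = 0" "e u \<bullet> vderiv_n 1 e u = 0"
    "e u \<bullet> vderiv_n 2 e u = -1" "vderiv_n 1 e u \<bullet> vderiv_n 2 e u = 0"
    "vderiv_n 2 s u \<bullet> vderiv_n 1 e u = - (vderiv_n 1 s u \<bullet> vderiv_n 2 e u)"
proof -
  let ?e1 = "vderiv_n 1 e" and ?s1 = "vderiv_n 1 s"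
  have unit: "\<forall>t\<in>I. e t \<bullet> e t = 1" "\<forall>t\<in>I. ?e1 t \<bullet> ?e1 t = 1" and orth: "\<forall>t\<in>I. ?s1 t \<bullet> ?e1 t = 0"
    using standard by (auto simp: norm_eq_1)
  have e_e1: "\<forall>t\<in>I. e t \<bullet> ?e1 t = 0"
  proof
    fix t assume t: "t \<in> I"
    have "?e1 t \<bullet> e t + e t \<bullet> ?e1 t = 0"
      by (rule has_real_derivative_constant_on_open_eq_0[OF open_domain t unit(1)])
        (rule has_real_derivative_inner[OF e_derivatives(1)[OF t] e_derivatives(1)[OF t]])
    then show "e t \<bullet> ?e1 t = 0" by (simp add: inner_commute)
  qed
  show "e u \<bullet> e u = 1" "?e1 u \<bullet> ?e1 u = 1" "?s1 u \<bullet> ?e1 u = 0" "e u \<bullet> ?e1 u = 0"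
    using unit orth e_e1 u by auto
  have "?e1 u \<bullet> ?e1 u + e u \<bullet> vderiv_n 2 e u = 0"
    by (rule has_real_derivative_constant_on_open_eq_0[OF open_domain u e_e1])
      (rule has_real_derivative_inner[OF e_derivatives(1)[OF u] e_derivatives(2)[OF u]])
  then show "e u \<bullet> vderiv_n 2 e u = -1" using unit u by simp
  have "vderiv_n 2 e u \<bullet> ?e1 u + ?e1 u \<bullet> vderiv_n 2 e u = 0"
    by (rule has_real_derivative_constant_on_open_eq_0[OF open_domain u unit(2)])
      (rule has_real_derivative_inner[OF e_derivatives(2)[OF u] e_derivatives(2)[OF u]])
  then show "?e1 u \<bullet> vderiv_n 2 e u = 0" by (simp add: inner_commute)
  have "vderiv_n 2 s u \<bullet> ?e1 u + ?s1 u \<bullet> vderiv_n 2 e u = 0"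
    by (rule has_real_derivative_constant_on_open_eq_0[OF open_domain u orth])
      (rule has_real_derivative_inner[OF s_derivatives(2)[OF u] e_derivatives(2)[OF u]])
  then show "vderiv_n 2 s u \<bullet> ?e1 u = - (?s1 u \<bullet> vderiv_n 2 e u)" by simp
qed

lemma triple_s1_e_e2: "u \<in> I \<Longrightarrow> triple (vderiv_n 1 s u) (e u) (vderiv_n 2 e u) = 0"
  using triple_mult_inner_self[of "vderiv_n 1 s u" "e u" "vderiv_n 2 e u" "vderiv_n 1 e u"]
    frame_inner by (simp add: inner_commute)

lemma inner_s1_e2: "u \<in> I \<Longrightarrow> vderiv_n 1 s u \<bullet> vderiv_n 2 e u = kappa u * delta u - sigma u"
  using triple_mult_triple[of "e u" "vderiv_n 1 e u" "vderiv_n 2 e u" "vderiv_n 1 s u" "e u" "vderiv_n 1 e u"]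
    frame_inner by (simp add: rs_kappa_def rs_delta_def inner_commute)

lemma inner_s1_s1: "u \<in> I \<Longrightarrow> vderiv_n 1 s u \<bullet> vderiv_n 1 s u = (delta u)^2 + (sigma u)^2"
  using triple_mult_triple[of "vderiv_n 1 s u" "e u" "vderiv_n 1 e u" "vderiv_n 1 s u" "e u" "vderiv_n 1 e u"]
    frame_inner by (simp add: rs_delta_def inner_commute power2_eq_square)

lemma delta_has_derivative_triple:
  assumes u: "u \<in> I"
  shows "(delta has_real_derivative triple (vderiv_n 2 s u) (e u) (vderiv_n 1 e u)) (at u)"
proof -
  have "((\<lambda>t. triple (vderiv_n 1 s t) (e t) (vderiv_n 1 e t)) has_real_derivative
          triple (vderiv_n 2 s u) (e u) (vderiv_n 1 e u) + triple (vderiv_n 1 s u) (vderiv_n 1 e u) (vderiv_n 1 e u)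
          + triple (vderiv_n 1 s u) (e u) (vderiv_n 2 e u)) (at u)"
    by (rule has_real_derivative_triple[OF s_derivatives(2)[OF u] e_derivatives(1,2)[OF u]])
  then show ?thesis using triple_s1_e_e2[OF u] by (simp add: triple_repeated rs_delta_def[abs_def])
qed

lemma deriv_delta_eq: "u \<in> I \<Longrightarrow> deriv delta u = triple (vderiv_n 2 s u) (e u) (vderiv_n 1 e u)"
  by (rule DERIV_imp_deriv[OF delta_has_derivative_triple])

lemma delta_has_derivative: "u \<in> I \<Longrightarrow> (delta has_real_derivative deriv delta u) (at u)"
  using delta_has_derivative_triple deriv_delta_eq by simp

lemma continuous_on_invariants:
  "continuous_on I delta" "continuous_on I sigma" "continuous_on I kappa"
proof -
  have "(sigma has_real_derivative vderiv_n 2 s u \<bullet> e u + vderiv_n 1 s u \<bullet> vderiv_n 1 e u) (at u)"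
    if "u \<in> I" for u
    by (rule has_real_derivative_inner[OF s_derivatives(2) e_derivatives(1)]) (use that in auto)
  moreover have "(kappa has_real_derivative
      triple (vderiv_n 1 e u) (vderiv_n 1 e u) (vderiv_n 2 e u) + triple (e u) (vderiv_n 2 e u) (vderiv_n 2 e u)
      + triple (e u) (vderiv_n 1 e u) (vderiv_n 3 e u)) (at u)" if "u \<in> I" for u
    unfolding rs_kappa_def[abs_def]
    by (rule has_real_derivative_triple[OF e_derivatives]) (use that in auto)
  ultimately show "continuous_on I delta" "continuous_on I sigma" "continuous_on I kappa"
    using delta_has_derivative by (auto intro!: continuous_at_imp_continuous_on DERIV_isCont)
qed

lemma rs_w_pos: "u \<in> I \<Longrightarrow> rs_w s e u v > 0"
  using skew by (simp add: rs_w_def add_pos_nonneg)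

lemma rs_xi_eq:
  assumes u: "u \<in> I"
  shows "rs_xi s e u v = (1 / rs_w s e u v) *\<^sub>R cross3 (vderiv_n 1 s u + v *\<^sub>R vderiv_n 1 e u) (e u)"
proof -
  define x1 where "x1 = vderiv_n 1 s u + v *\<^sub>R vderiv_n 1 e u"
  have "(norm (cross3 x1 (e u)))^2 + (x1 \<bullet> e u)^2 = (norm x1 * norm (e u))^2"
    by (rule norm_cross_dot)
  moreover have "(norm x1)^2 = (delta u)^2 + (sigma u)^2 + v^2" "(norm (e u))^2 = 1" "x1 \<bullet> e u = sigma u"
    unfolding x1_def power2_norm_eq_inner using frame_inner[OF u] inner_s1_s1[OF u]
    by (simp_all add: algebra_simps inner_commute power2_eq_square)
  ultimately have "(norm (cross3 x1 (e u)))^2 = (delta u)^2 + v^2"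
    by (simp add: power_mult_distrib)
  then have "norm (cross3 x1 (e u)) = rs_w s e u v"
    unfolding rs_w_def by (metis norm_ge_zero real_sqrt_unique)
  then show ?thesis
    unfolding rs_xi_def pd1_rsurf[OF s_C3 e_C3 u] pd2_rsurf x1_def[symmetric] Let_def by simp
qed

lemma h11_times_w:
  assumes u: "u \<in> I"
  shows "rs_h11 s e u v * rs_w s e u v =
           delta u * sigma u - kappa u * (delta u)^2 - deriv delta u * v - kappa u * v^2"
proof -
  let ?s1 = "vderiv_n 1 s u" and ?s2 = "vderiv_n 2 s u"
    and ?e1 = "vderiv_n 1 e u" and ?e2 = "vderiv_n 2 e u"
  have "triple ?s1 (e u) ?s2 = (?s2 \<bullet> ?e1) * delta u"
    using triple_mult_inner_self[of ?s1 "e u" ?s2 ?e1] frame_inner[OF u]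
    by (simp add: rs_delta_def inner_commute)
  also have "?s2 \<bullet> ?e1 = sigma u - kappa u * delta u"
    using frame_inner(7)[OF u] inner_s1_e2[OF u] by simp
  finally have s1_e_s2: "triple ?s1 (e u) ?s2 = delta u * sigma u - kappa u * (delta u)^2"
    by (simp add: power2_eq_square algebra_simps)
  have "rs_h11 s e u v * rs_w s e u v = cross3 (?s1 + v *\<^sub>R ?e1) (e u) \<bullet> (?s2 + v *\<^sub>R ?e2)"
    unfolding rs_h11_def rs_xi_eq[OF u] pd1_pd1_rsurf[OF s_C3 e_C3 u open_domain]
    using rs_w_pos[OF u, of v] by simp
  also have "\<dots> = triple ?s1 (e u) ?s2 + v * triple ?e1 (e u) ?s2 + v * triple ?s1 (e u) ?e2
                  + v * v * triple ?e1 (e u) ?e2"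
    unfolding inner_cross3_eq_triple by (rule triple_add_scaleR)
  also have "triple ?e1 (e u) ?s2 = - deriv delta u"
    unfolding deriv_delta_eq[OF u] by (metis triple_cycle triple_swap(2))
  also have "triple ?e1 (e u) ?e2 = - kappa u"
    unfolding rs_kappa_def by (metis triple_swap(1))
  finally show ?thesis
    using s1_e_s2 triple_s1_e_e2[OF u] by (simp add: power2_eq_square)
qed

lemma h12_times_w: "u \<in> I \<Longrightarrow> rs_h12 s e u v * rs_w s e u v = delta u"
  unfolding rs_h12_def rs_xi_eq pd2_pd1_rsurf[OF s_C3 e_C3]
  using rs_w_pos[of u v] by (simp add: inner_cross3_eq_triple triple_expand rs_delta_def algebra_simps)

lemma lambda_eq:
  assumes u: "u \<in> I"
  shows "rs_lambda s e u = sigma u / \<bar>delta u\<bar>"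
proof -
  define n where "n = norm (vderiv_n 1 s u)"
  define c where "c = sigma u / n"
  have n2: "n^2 = (delta u)^2 + (sigma u)^2"
    unfolding n_def power2_norm_eq_inner inner_s1_s1[OF u] ..
  have n_pos: "n > 0"
    using skew u n2 unfolding n_def by (metis norm_eq_zero norm_ge_zero order_le_less
        power2_eq_square sum_power2_eq_zero_iff zero_power2)
  have angle: "vec_angle (e u) (vderiv_n 1 s u) = arccos c"
    using standard u unfolding vec_angle_def c_def n_def by (simp add: inner_commute)
  have "1 - c^2 = (n^2 - (sigma u)^2) / n^2"
    using n_pos unfolding c_def by (simp add: power_divide diff_divide_distrib)
  then have c2: "1 - c^2 = (delta u / n)^2"
    by (simp add: n2 power_divide)
  then have "\<bar>c\<bar> \<le> 1"
    by (metis abs_le_square_iff abs_one diff_ge_0_iff_ge one_power2 zero_le_power2)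
  then have "sin (arccos c) = \<bar>delta u\<bar> / n"
    using n_pos by (simp add: sin_arccos_abs c2 real_sqrt_abs)
  then show ?thesis
    using n_pos skew u \<open>\<bar>c\<bar> \<le> 1\<close>
    unfolding rs_lambda_def angle cot_def by (simp add: cos_arccos_abs c_def)
qed

lemma sqrt_abs_delta_mult_lambda:
  assumes "u \<in> I"
  shows "sqrt \<bar>delta u\<bar> * rs_lambda s e u = 2 * (sigma u / (2 * sqrt \<bar>delta u\<bar>))"
proof -
  have "sqrt \<bar>delta u\<bar> > 0" "sqrt \<bar>delta u\<bar> * sqrt \<bar>delta u\<bar> = \<bar>delta u\<bar>"
    using skew assms by simp_all
  then show ?thesis unfolding lambda_eq[OF assms] by (auto simp: field_simps)
qed

end

section \<open>Right normalizations\<close>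

lemma pd2_rn_q:
  assumes "rs_delta s e u \<noteq> 0"
  shows "pd2 (rn_q s e f g) u v = (g u * (rs_w s e u v)^2 - (f u + g u * v) * v) / (rs_w s e u v)^3"
proof -
  define d where "d = rs_delta s e u"
  have "d^2 + v^2 > 0" using assms by (simp add: d_def add_pos_nonneg)
  then have "((\<lambda>b. (f u + g u * b) / sqrt (d^2 + b^2)) has_real_derivative
          (g u * (sqrt (d^2 + v^2))^2 - (f u + g u * v) * v) / (sqrt (d^2 + v^2))^3) (at v)"
    by (auto intro!: derivative_eq_intros)
      (auto simp: divide_simps power2_eq_square power3_eq_cube real_sqrt_mult[symmetric])
  then show ?thesis unfolding pd2_def rn_q_def rs_w_def d_def[symmetric] by (simp add: vector_derivative_at_real)
qed

lemma pd1_rn_q: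
  assumes "rs_delta s e u \<noteq> 0" and "(rs_delta s e has_real_derivative d') (at u)"
    and "(f has_real_derivative f') (at u)" and "(g has_real_derivative g') (at u)"
  shows "pd1 (rn_q s e f g) u v =
           ((f' + g' * v) * (rs_w s e u v)^2 - (f u + g u * v) * rs_delta s e u * d') / (rs_w s e u v)^3"
proof -
  define d where "d = rs_delta s e u"
  have "d^2 + v^2 > 0" using assms by (simp add: d_def add_pos_nonneg)
  then have "((\<lambda>t. (f t + g t * v) / sqrt ((rs_delta s e t)^2 + v^2)) has_real_derivative
          ((f' + g' * v) * (sqrt (d^2 + v^2))^2 - (f u + g u * v) * d * d') / (sqrt (d^2 + v^2))^3) (at u)"
    unfolding d_def
    by (auto intro!: derivative_eq_intros assms(2-4))
      (auto simp: divide_simps power2_eq_square power3_eq_cube real_sqrt_mult[symmetric])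
  then show ?thesis unfolding pd1_def rn_q_def rs_w_def d_def by (simp add: vector_derivative_at_real)
qed

lemma rn_rootdet_eq: "rn_rootdet s e f g u v = \<bar>rn_G12 s e f g u v\<bar>"
  unfolding rn_rootdet_def rn_G22_eq_0 by simp

locale right_normalized_ruled_surface = standard_ruled_surface +
  fixes f g :: "real \<Rightarrow> real"
  assumes interval_domain: "is_interval I"
    and f_C1: "Ck_on 1 I f" and g_C1: "Ck_on 1 I g"
    and support_nonzero: "\<forall>u\<in>I. f u \<noteq> 0 \<or> g u \<noteq> 0"
begin

abbreviation f' :: "real \<Rightarrow> real" where "f' \<equiv> vderiv_n 1 f"
abbreviation g' :: "real \<Rightarrow> real" where "g' \<equiv> vderiv_n 1 g"

lemmas f_has_derivative = Ck_on_1_has_real_derivative[OF f_C1]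
lemmas g_has_derivative = Ck_on_1_has_real_derivative[OF g_C1]

lemma continuous_on_f_g: "continuous_on I f" "continuous_on I g"
  using f_has_derivative g_has_derivative
  by (auto intro!: continuous_at_imp_continuous_on DERIV_isCont)

lemma rn_G11_eq:
  "u \<in> I \<Longrightarrow> rn_G11 s e f g u v =
     (delta u * sigma u - kappa u * (delta u)^2 - deriv delta u * v - kappa u * v^2) / (f u + g u * v)"
  unfolding rn_G11_def rn_q_def divide_divide_eq_right by (simp add: h11_times_w)

lemma rn_G12_eq: "u \<in> I \<Longrightarrow> rn_G12 s e f g u v = delta u / (f u + g u * v)"
  unfolding rn_G12_def rn_q_def divide_divide_eq_right by (simp add: h12_times_w)

lemma rn_T1_eq:
  assumes "u \<in> I"
  shows "rn_T1 s e f g u v = g u / delta u"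
proof -
  have "(rs_w s e u v)^2 = (delta u)^2 + v^2" by (simp add: rs_w_def add_pos_nonneg)
  then show ?thesis
    using rs_w_pos[OF assms, of v] skew assms
    unfolding rn_T1_def Let_def pd2_rn_q[OF skew[rule_format, OF assms]] rn_q_def
    by (simp add: divide_simps power2_eq_square power3_eq_cube; algebra)
qed

lemma rn_T2_eq:
  assumes u: "u \<in> I"
  shows "rn_T2 s e f g u v =
     (2 * delta u * (f' u + g' u * v) - deriv delta u * (f u + g u * v)) / (2 * (delta u)^2)
     - g u * (delta u * sigma u - kappa u * (delta u)^2 - deriv delta u * v - kappa u * v^2) / (delta u)^2"
proof -
  have "(rs_w s e u v)^2 = (delta u)^2 + v^2" by (simp add: rs_w_def add_pos_nonneg)
  moreover have "rs_h11 s e u v = (delta u * sigma u - kappa u * (delta u)^2 - deriv delta u * v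
                                   - kappa u * v^2) / rs_w s e u v"
    using h11_times_w[OF u, of v] rs_w_pos[OF u, of v] by (simp add: field_simps)
  ultimately show ?thesis
    using rs_w_pos[OF u, of v] skew u
    unfolding rn_T2_def Let_def rn_T1_eq[OF u] rn_q_def
      pd1_rn_q[OF skew[rule_format, OF u] delta_has_derivative[OF u] f_has_derivative[OF u]
        g_has_derivative[OF u]]
    by (simp add: divide_simps power2_eq_square power3_eq_cube; algebra)
qed

lemma pd1_rootdet_T1:
  assumes u: "u \<in> I" and p: "f u + g u * v \<noteq> 0"
  shows "pd1 (\<lambda>a b. rn_rootdet s e f g a b * rn_T1 s e f g a b) u v =
     sgn (delta u / (f u + g u * v))
       * ((deriv delta u * (f u + g u * v) - delta u * (f' u + g' u * v)) / (f u + g u * v)^2)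
       * (g u / delta u)
     + \<bar>delta u / (f u + g u * v)\<bar> * ((g' u * delta u - g u * deriv delta u) / (delta u)^2)"
  unfolding pd1_def
proof (rule vector_derivative_at_real)
  have "((\<lambda>t. \<bar>delta t / (f t + g t * v)\<bar> * (g t / delta t)) has_real_derivative
     sgn (delta u / (f u + g u * v))
       * ((deriv delta u * (f u + g u * v) - delta u * (f' u + g' u * v)) / (f u + g u * v)^2)
       * (g u / delta u)
     + \<bar>delta u / (f u + g u * v)\<bar> * ((g' u * delta u - g u * deriv delta u) / (delta u)^2)) (at u)"
    using p skew u
    by (auto intro!: derivative_eq_intros has_real_derivative_abs delta_has_derivative
        f_has_derivative g_has_derivative)
      (auto simp: divide_simps power2_eq_square sgn_if abs_if; algebra)
  then show "((\<lambda>t. rn_rootdet s e f g t v * rn_T1 s e f g t v) has_real_derivative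
     sgn (delta u / (f u + g u * v))
       * ((deriv delta u * (f u + g u * v) - delta u * (f' u + g' u * v)) / (f u + g u * v)^2)
       * (g u / delta u)
     + \<bar>delta u / (f u + g u * v)\<bar> * ((g' u * delta u - g u * deriv delta u) / (delta u)^2)) (at u)"
    by (rule has_field_derivative_transform_within_open[OF _ open_domain u])
      (simp add: rn_rootdet_eq rn_G12_eq rn_T1_eq)
qed

lemma pd2_rootdet_T2:
  assumes u: "u \<in> I" and p: "f u + g u * v \<noteq> 0"
  shows "pd2 (\<lambda>a b. rn_rootdet s e f g a b * rn_T2 s e f g a b) u v =
     sgn (delta u / (f u + g u * v)) * (- delta u * g u / (f u + g u * v)^2) * rn_T2 s e f g u v
     + \<bar>delta u / (f u + g u * v)\<bar>
       * ((2 * delta u * g' u - deriv delta u * g u) / (2 * (delta u)^2)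
          + g u * (deriv delta u + 2 * kappa u * v) / (delta u)^2)"
  unfolding pd2_def rn_rootdet_eq rn_G12_eq[OF u] rn_T2_eq[OF u]
  by (rule vector_derivative_at_real)
    (use p skew u in \<open>auto intro!: derivative_eq_intros has_real_derivative_abs\<close>,
      auto simp: divide_simps power2_eq_square sgn_if abs_if; algebra)

text \<open>\<open>residual u = 0\<close> is the differential equation of condition (c) with denominators
  cleared, see \<open>quotient_has_derivative_iff_residual_eq_0\<close>.\<close>

definition residual :: "real \<Rightarrow> real" where
  "residual u = 2 * delta u * (g' u * f u - g u * f' u) + deriv delta u * f u * g u
                + delta u * sigma u * (g u)^2"

lemma rn_divT_eq:
  assumes u: "u \<in> I" and p: "f u + g u * v \<noteq> 0"
  shows "rn_divT s e f g u v =
     (residual u - kappa u * (delta u)^2 * (g u)^2 + 2 * kappa u * f u * g u * v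
      + kappa u * (g u)^2 * v^2) / ((delta u)^2 * (f u + g u * v))"
proof -
  define d d' p where "d = delta u" and "d' = deriv delta u" and "p = f u + g u * v"
  have "d \<noteq> 0" "p \<noteq> 0" using skew u p by (simp_all add: d_def p_def)
  have div: "rn_divT s e f g u v =
     (sgn (d / p) * ((d' * p - d * (f' u + g' u * v)) / p^2) * (g u / d)
      + \<bar>d / p\<bar> * ((g' u * d - g u * d') / d^2)
      + sgn (d / p) * (- d * g u / p^2)
        * ((2 * d * (f' u + g' u * v) - d' * p) / (2 * d^2)
           - g u * (d * sigma u - kappa u * d^2 - d' * v - kappa u * v^2) / d^2)
      + \<bar>d / p\<bar> * ((2 * d * g' u - d' * g u) / (2 * d^2) + g u * (d' + 2 * kappa u * v) / d^2))
     / \<bar>d / p\<bar>"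
    unfolding rn_divT_def pd1_rootdet_T1[OF u p] pd2_rootdet_T2[OF u p]
    unfolding rn_T2_eq[OF u] rn_rootdet_eq rn_G12_eq[OF u] d_def d'_def p_def by simp
  have "rn_divT s e f g u v =
     (2 * d * (g' u * f u - g u * f' u) + d' * f u * g u + d * sigma u * (g u)^2
      - kappa u * d^2 * (g u)^2 + 2 * kappa u * f u * g u * v + kappa u * (g u)^2 * v^2) / (d^2 * p)"
  proof (cases "d / p > 0")
    case True
    then have "\<bar>d / p\<bar> = d / p" "sgn (d / p) = 1" by (simp_all only: abs_of_pos sgn_pos)
    then show ?thesis unfolding div using \<open>d \<noteq> 0\<close> \<open>p \<noteq> 0\<close> unfolding p_def
      by (simp add: divide_simps power2_eq_square power3_eq_cube; algebra)
  next
    case False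
    then have "d / p < 0" using \<open>d \<noteq> 0\<close> \<open>p \<noteq> 0\<close> by (simp add: less_le)
    then have "\<bar>d / p\<bar> = - (d / p)" "sgn (d / p) = -1" by (simp_all only: abs_of_neg sgn_neg)
    then show ?thesis unfolding div using \<open>d \<noteq> 0\<close> \<open>p \<noteq> 0\<close> unfolding p_def
      by (simp add: divide_simps power2_eq_square power3_eq_cube; algebra)
  qed
  then show ?thesis by (simp add: residual_def d_def d'_def p_def)
qed

lemma rn_S_eq:
  assumes u: "u \<in> I" and p: "f u + g u * v \<noteq> 0"
  shows "rn_S s e f g u v =
     (residual u - kappa u * (delta u)^2 * (g u)^2 - 2 * kappa u * (f u)^2
      - 2 * kappa u * f u * g u * v - kappa u * (g u)^2 * v^2) / (2 * (delta u)^2 * (f u + g u * v))"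
proof -
  have "metric_curvature (rn_G11 s e f g) (rn_G12 s e f g) (\<lambda>u v. 0) u v =
     (delta u * (g' u * f u - g u * f' u) + (- kappa u) * (f u)^2 + (- kappa u) * f u * g u * v
      + (- kappa u) * (g u)^2 * v^2 / 2 - (- deriv delta u) * f u * g u / 2
      + (delta u * sigma u - kappa u * (delta u)^2) * (g u)^2 / 2) / ((delta u)^2 * (f u + g u * v))"
    by (rule metric_curvature_fractional[OF _ _ open_domain u
          delta_has_derivative[OF u] f_has_derivative[OF u] g_has_derivative[OF u] p])
      (use skew u in \<open>auto simp: rn_G11_eq rn_G12_eq algebra_simps\<close>)
  then show ?thesis
    using p skew u unfolding rn_S_def rn_G22_eq_0 residual_def by (simp add: divide_simps; algebra)
qed

lemma rn_divT_vanishing_iff: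
  assumes u: "u \<in> I"
  shows "(\<forall>v. f u + g u * v \<noteq> 0 \<longrightarrow> rn_divT s e f g u v = 0)
           \<longleftrightarrow> kappa u * g u = 0 \<and> residual u = 0"
proof
  assume "\<forall>v. f u + g u * v \<noteq> 0 \<longrightarrow> rn_divT s e f g u v = 0"
  then have "\<forall>v. f u + g u * v \<noteq> 0 \<longrightarrow>
      residual u - kappa u * (delta u)^2 * (g u)^2 + 2 * kappa u * f u * g u * v
      + kappa u * (g u)^2 * v^2 = 0"
    using skew u by (auto simp: rn_divT_eq[OF u])
  from quadratic_vanishing_off_root[OF this] support_nonzero u
  show "kappa u * g u = 0 \<and> residual u = 0" by (auto simp: power2_eq_square)
qed (auto simp: rn_divT_eq[OF u])

lemma rn_S_vanishing_iff:
  assumes u: "u \<in> I"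
  shows "(\<forall>v. f u + g u * v \<noteq> 0 \<longrightarrow> rn_S s e f g u v = 0)
           \<longleftrightarrow> kappa u * g u = 0 \<and> residual u = 2 * kappa u * (f u)^2"
proof
  assume "\<forall>v. f u + g u * v \<noteq> 0 \<longrightarrow> rn_S s e f g u v = 0"
  then have "\<forall>v. f u + g u * v \<noteq> 0 \<longrightarrow>
      (residual u - kappa u * (delta u)^2 * (g u)^2 - 2 * kappa u * (f u)^2)
      + (- 2 * kappa u * f u * g u) * v + (- kappa u * (g u)^2) * v^2 = 0"
    using skew u by (auto simp: rn_S_eq[OF u])
  from quadratic_vanishing_off_root[OF this] support_nonzero u
  show "kappa u * g u = 0 \<and> residual u = 2 * kappa u * (f u)^2" by (auto simp: power2_eq_square)
qed (auto simp: rn_S_eq[OF u] power2_eq_square)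

lemma quotient_has_derivative_iff_residual_eq_0:
  assumes u: "u \<in> I" and "g u \<noteq> 0"
  shows "((\<lambda>t. f t / (g t * sqrt \<bar>delta t\<bar>)) has_real_derivative sigma u / (2 * sqrt \<bar>delta u\<bar>)) (at u)
           \<longleftrightarrow> residual u = 0"
proof -
  define r X Y where "r = sqrt \<bar>delta u\<bar>"
    and "X = 2 * delta u * (f' u * g u - f u * g' u) - deriv delta u * f u * g u"
    and "Y = 2 * delta u * (g u)^2 * r"
  have "delta u \<noteq> 0" using skew u by simp
  then have "r \<noteq> 0" "Y \<noteq> 0" using \<open>g u \<noteq> 0\<close> by (simp_all add: r_def Y_def)
  have quotient: "((\<lambda>t. f t / (g t * sqrt \<bar>delta t\<bar>)) has_real_derivative X / Y) (at u)"
    unfolding X_def Y_def r_def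
    by (rule has_real_derivative_div_mult_sqrt_abs[OF f_has_derivative[OF u] g_has_derivative[OF u]
          delta_has_derivative[OF u] \<open>delta u \<noteq> 0\<close> \<open>g u \<noteq> 0\<close>])
  have residual: "residual u = delta u * sigma u * (g u)^2 - X"
    unfolding residual_def X_def by (simp add: algebra_simps power2_eq_square)
  have "X / Y = sigma u / (2 * r) \<longleftrightarrow> X = sigma u / (2 * r) * Y"
    by (rule nonzero_divide_eq_eq[OF \<open>Y \<noteq> 0\<close>])
  also have "sigma u / (2 * r) * Y = delta u * sigma u * (g u)^2"
    using \<open>r \<noteq> 0\<close> by (simp add: Y_def)
  also have "X = delta u * sigma u * (g u)^2 \<longleftrightarrow> residual u = 0"
    using residual by linarith
  finally have "X / Y = sigma u / (2 * r) \<longleftrightarrow> residual u = 0" .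
  moreover have "((\<lambda>t. f t / (g t * sqrt \<bar>delta t\<bar>)) has_real_derivative sigma u / (2 * r)) (at u)
                   \<longleftrightarrow> X / Y = sigma u / (2 * r)"
  proof
    assume "((\<lambda>t. f t / (g t * sqrt \<bar>delta t\<bar>)) has_real_derivative sigma u / (2 * r)) (at u)"
    then show "X / Y = sigma u / (2 * r)" by (rule DERIV_unique[OF quotient])
  qed (use quotient in simp)
  ultimately show ?thesis by (simp add: r_def)
qed

lemma g_nonzero_if_residual_eq_0:
  assumes residual: "\<forall>u\<in>I. residual u = 0" and "\<exists>u\<in>I. g u \<noteq> 0"
  shows "\<forall>u\<in>I. g u \<noteq> 0"
proof -
  have "\<forall>t\<in>I. g t * sqrt \<bar>delta t\<bar> \<noteq> 0"
  proof (rule denominator_nonzero_if_quotient_has_continuous_derivative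
      [OF interval_domain continuous_on_f_g(1), of _ "\<lambda>t. sigma t / (2 * sqrt \<bar>delta t\<bar>)"])
    show "continuous_on I (\<lambda>t. g t * sqrt \<bar>delta t\<bar>)"
      using continuous_on_f_g continuous_on_invariants by (intro continuous_intros)
    show "continuous_on I (\<lambda>t. sigma t / (2 * sqrt \<bar>delta t\<bar>))"
      using continuous_on_invariants(1) skew
      by (intro continuous_on_divide[OF continuous_on_invariants(2)] continuous_intros) auto
    show "\<exists>y\<in>I. g y * sqrt \<bar>delta y\<bar> \<noteq> 0" "\<forall>t\<in>I. g t * sqrt \<bar>delta t\<bar> = 0 \<longrightarrow> f t \<noteq> 0"
      using \<open>\<exists>u\<in>I. g u \<noteq> 0\<close> support_nonzero skew by auto
    show "\<forall>t\<in>I. g t * sqrt \<bar>delta t\<bar> \<noteq> 0 \<longrightarrow> ((\<lambda>t. f t / (g t * sqrt \<bar>delta t\<bar>))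
            has_real_derivative sigma t / (2 * sqrt \<bar>delta t\<bar>)) (at t)"
      using quotient_has_derivative_iff_residual_eq_0 residual by simp
  qed
  then show ?thesis by simp
qed

lemma kappa_eq_0_if_residual_eq:
  assumes "\<forall>u\<in>I. kappa u * g u = 0 \<and> residual u = 2 * kappa u * (f u)^2"
  shows "\<forall>u\<in>I. kappa u = 0"
proof (rule ccontr)
  assume "\<not> (\<forall>u\<in>I. kappa u = 0)"
  then obtain u where u: "u \<in> I" "kappa u \<noteq> 0" by auto
  have "isCont kappa u"
    using continuous_on_invariants(3) open_domain u by (simp add: continuous_on_eq_continuous_at)
  then obtain \<epsilon> where "\<epsilon> > 0" and \<epsilon>: "\<forall>t. dist u t < \<epsilon> \<longrightarrow> kappa t \<noteq> 0"
    using continuous_at_avoid u(2) by blast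
  define U where "U = ball u \<epsilon> \<inter> I"
  have U: "open U" "u \<in> U" using open_domain u \<open>\<epsilon> > 0\<close> by (auto simp: U_def)
  have g_U: "\<forall>t\<in>U. g t = 0" using assms \<epsilon> by (auto simp: U_def)
  then have "g' u = 0"
    using has_real_derivative_constant_on_open_eq_0[OF U g_U g_has_derivative[OF u(1)]] by simp
  moreover have "g u = 0" "f u \<noteq> 0" using g_U U support_nonzero u by auto
  ultimately have "residual u = 0" by (simp add: residual_def)
  moreover have "residual u = 2 * kappa u * (f u)^2" using assms u(1) by blast
  ultimately show False using \<open>f u \<noteq> 0\<close> u(2) by simp
qed

lemma primitive_if_residual_eq_0:
  assumes residual: "\<forall>u\<in>I. residual u = 0" and "\<exists>u\<in>I. g u \<noteq> 0"
  shows "\<exists>L c. (\<forall>u\<in>I. (L has_real_derivative sqrt \<bar>delta u\<bar> * rs_lambda s e u) (at u))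
               \<and> (\<forall>u\<in>I. f u = 1 / 2 * sqrt \<bar>delta u\<bar> * g u * (L u + c))"
proof -
  have g: "\<forall>u\<in>I. g u \<noteq> 0" using g_nonzero_if_residual_eq_0 assms by blast
  define L where "L t = 2 * (f t / (g t * sqrt \<bar>delta t\<bar>))" for t
  have "(L has_real_derivative sqrt \<bar>delta u\<bar> * rs_lambda s e u) (at u)" if "u \<in> I" for u
  proof -
    have "((\<lambda>t. f t / (g t * sqrt \<bar>delta t\<bar>)) has_real_derivative sigma u / (2 * sqrt \<bar>delta u\<bar>)) (at u)"
      using quotient_has_derivative_iff_residual_eq_0 residual g that by blast
    then show ?thesis unfolding L_def sqrt_abs_delta_mult_lambda[OF that] by (rule DERIV_cmult)
  qed
  moreover have "f u = 1 / 2 * sqrt \<bar>delta u\<bar> * g u * (L u + 0)" if "u \<in> I" for u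
    using g skew that by (simp add: L_def)
  ultimately show ?thesis by blast
qed

lemma residual_eq_0_if_primitive:
  assumes L: "\<forall>u\<in>I. (L has_real_derivative sqrt \<bar>delta u\<bar> * rs_lambda s e u) (at u)"
    and f: "\<forall>u\<in>I. f u = 1 / 2 * sqrt \<bar>delta u\<bar> * g u * (L u + c)"
  shows "\<forall>u\<in>I. residual u = 0"
proof
  fix u assume u: "u \<in> I"
  have g: "g t \<noteq> 0" if "t \<in> I" for t
  proof
    assume "g t = 0"
    then have "f t = 0" using f[rule_format, OF that] by simp
    then show False using support_nonzero \<open>g t = 0\<close> that by auto
  qed
  have "((\<lambda>t. (L t + c) / 2) has_real_derivative sigma u / (2 * sqrt \<bar>delta u\<bar>)) (at u)"
    using L[rule_format, OF u] unfolding sqrt_abs_delta_mult_lambda[OF u]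
    by (auto intro!: derivative_eq_intros)
  then have "((\<lambda>t. f t / (g t * sqrt \<bar>delta t\<bar>)) has_real_derivative sigma u / (2 * sqrt \<bar>delta u\<bar>)) (at u)"
    by (rule has_field_derivative_transform_within_open[OF _ open_domain u])
      (use f g skew in \<open>simp add: field_simps\<close>)
  then show "residual u = 0" using quotient_has_derivative_iff_residual_eq_0[OF u g[OF u]] by simp
qed

lemma residual_eq_0_iff_primitive:
  assumes "\<exists>u\<in>I. g u \<noteq> 0"
  shows "(\<forall>u\<in>I. residual u = 0) \<longleftrightarrow>
           (\<exists>L c. (\<forall>u\<in>I. (L has_real_derivative sqrt \<bar>delta u\<bar> * rs_lambda s e u) (at u))
                 \<and> (\<forall>u\<in>I. f u = 1 / 2 * sqrt \<bar>delta u\<bar> * g u * (L u + c)))"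
  using primitive_if_residual_eq_0[OF _ assms] residual_eq_0_if_primitive by blast

lemma rn_divT_vanishes_iff:
  assumes "\<exists>u\<in>I. g u \<noteq> 0"
  shows "(\<forall>u\<in>I. \<forall>v. f u + g u * v \<noteq> 0 \<longrightarrow> rn_divT s e f g u v = 0)
           \<longleftrightarrow> conoidal_on I e \<and> (\<forall>u\<in>I. residual u = 0)"
proof -
  have "(\<forall>u\<in>I. \<forall>v. f u + g u * v \<noteq> 0 \<longrightarrow> rn_divT s e f g u v = 0)
          \<longleftrightarrow> (\<forall>u\<in>I. kappa u * g u = 0 \<and> residual u = 0)"
    using rn_divT_vanishing_iff by blast
  also have "\<dots> \<longleftrightarrow> (\<forall>u\<in>I. kappa u = 0) \<and> (\<forall>u\<in>I. residual u = 0)"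
    using g_nonzero_if_residual_eq_0[OF _ assms] by auto
  finally show ?thesis unfolding conoidal_on_def .
qed

lemma rn_S_vanishes_iff:
  "(\<forall>u\<in>I. \<forall>v. f u + g u * v \<noteq> 0 \<longrightarrow> rn_S s e f g u v = 0)
     \<longleftrightarrow> conoidal_on I e \<and> (\<forall>u\<in>I. residual u = 0)"
proof -
  have "(\<forall>u\<in>I. \<forall>v. f u + g u * v \<noteq> 0 \<longrightarrow> rn_S s e f g u v = 0)
          \<longleftrightarrow> (\<forall>u\<in>I. kappa u * g u = 0 \<and> residual u = 2 * kappa u * (f u)^2)"
    using rn_S_vanishing_iff by blast
  also have "\<dots> \<longleftrightarrow> (\<forall>u\<in>I. kappa u = 0) \<and> (\<forall>u\<in>I. residual u = 0)"
  proof
    assume S: "\<forall>u\<in>I. kappa u * g u = 0 \<and> residual u = 2 * kappa u * (f u)^2"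
    then have "\<forall>u\<in>I. kappa u = 0" by (rule kappa_eq_0_if_residual_eq)
    with S show "(\<forall>u\<in>I. kappa u = 0) \<and> (\<forall>u\<in>I. residual u = 0)" by simp
  qed simp
  finally show ?thesis unfolding conoidal_on_def .
qed

end

theorem proposition9:
  fixes s e :: "real \<Rightarrow> real^3" and f g :: "real \<Rightarrow> real" and I :: "real set"
  assumes I: "open I" "is_interval I"
    and reg: "Ck_on 3 I s" "Ck_on 3 I e"
    and std: "\<forall>u\<in>I. norm (e u) = 1 \<and> norm (vderiv_n 1 e u) = 1
                     \<and> vderiv_n 1 s u \<bullet> vderiv_n 1 e u = 0"
    and skew: "\<forall>u\<in>I. rs_delta s e u \<noteq> 0"
    and fg_reg: "Ck_on 1 I f" "Ck_on 1 I g"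
    and f_nz: "\<exists>u\<in>I. f u \<noteq> 0" and g_nz: "\<exists>u\<in>I. g u \<noteq> 0"
    and q_def: "\<forall>u\<in>I. f u \<noteq> 0 \<or> g u \<noteq> 0"
  shows "((\<forall>u\<in>I. \<forall>v. f u + g u * v \<noteq> 0 \<longrightarrow> rn_divT s e f g u v = 0)
            \<longleftrightarrow> (\<forall>u\<in>I. \<forall>v. f u + g u * v \<noteq> 0 \<longrightarrow> rn_S s e f g u v = 0))
       \<and> ((\<forall>u\<in>I. \<forall>v. f u + g u * v \<noteq> 0 \<longrightarrow> rn_S s e f g u v = 0)
            \<longleftrightarrow> (conoidal_on I e \<and>
                 (\<exists>L c. (\<forall>u\<in>I. (L has_real_derivative
                              sqrt \<bar>rs_delta s e u\<bar> * rs_lambda s e u) (at u))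
                       \<and> (\<forall>u\<in>I. f u = 1 / 2 * sqrt \<bar>rs_delta s e u\<bar> * g u * (L u + c)))))"
proof -
  interpret right_normalized_ruled_surface I s e f g
    using assms by unfold_locales auto
  show ?thesis
    using rn_divT_vanishes_iff[OF g_nz] rn_S_vanishes_iff residual_eq_0_iff_primitive[OF g_nz]
    by simp
qed

end
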